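(* Let $F \in S_d$ and let $\mathbb{X} \subset \mathbb{P}^n$ be a finite set of distinct points with $I_{\mathbb{X}} \subseteq F^\perp$. Let $I \subset T$ be any homogeneous ideal generated in degree $e>0$ and let $t \in I_e$. If $t$ is not a zero divisor in $T/(I_{\mathbb{X}} : I)$, then for all sufficiently large integers $s$ \[ e \cdot |\mathbb{X}| \;\geq\; \sum_{i=0}^s HF\big(T/((I_{\mathbb{X}} : I)+(t)),\, i\big) \;\geq\; \sum_{i=0}^{s} HF\big(T/((F^\perp : I)+( t) ),\, i\big). \]
   Context: $k$ is an algebraically closed field of characteristic zero, $S=k[x_0,\ldots,x_n]$ and $T=k[X_0,\ldots,X_n]$ (standard graded, $n\ge 1$), and $T$ acts on $S$ by differentiation: $X_i\circ F=\partial F/\partial x_i$, extended linearly. For a form $F\in S$, $F^\perp=\{g\in T : g\circ F=0\}$. For a homogeneous ideal $J\subseteq T$, $HF(T/J,i)=\dim_k T_i-\dim_k J_i$. $I_{\mathbb{X}}\subseteq T$ denotes the homogeneous ideal of the point set $\mathbb{X}$, and $J:I=\{g\in T: gI\subseteq J\}$. *)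

theory Defs
  imports "HOL-Library.Poly_Mapping" "HOL-Computational_Algebra.Polynomial"
begin

text \<open>Multivariate polynomials over 'k: finitely supported maps from monomials
  (exponent vectors, maps nat to nat of finite support) to coefficients.  Variable i is x_i (resp. X_i).
  S = k[x_0..x_n] and T = k[X_0..X_n] are both modelled by this type, restricted
  to polynomials whose monomials only involve variables 0..n.\<close>

type_synonym 'k mpoly = "(nat \<Rightarrow>\<^sub>0 nat) \<Rightarrow>\<^sub>0 'k"

definition alg_closed_field :: "'k::field itself \<Rightarrow> bool" where
  "alg_closed_field _ \<longleftrightarrow> (\<forall>p::'k poly. degree p > 0 \<longrightarrow> (\<exists>x. poly p x = 0))"

definition mon_deg :: "(nat \<Rightarrow>\<^sub>0 nat) \<Rightarrow> nat" where
  "mon_deg m = (\<Sum>i\<in>Poly_Mapping.keys m. Poly_Mapping.lookup m i)"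

definition polyring :: "nat \<Rightarrow> 'k::zero mpoly set" where
  "polyring n = {p. \<forall>m\<in>Poly_Mapping.keys p. Poly_Mapping.keys m \<subseteq> {..n}}"

definition forms :: "nat \<Rightarrow> nat \<Rightarrow> 'k::zero mpoly set" where
  "forms n d = {p \<in> polyring n. \<forall>m\<in>Poly_Mapping.keys p. mon_deg m = d}"

definition hcomp :: "nat \<Rightarrow> 'k::comm_monoid_add mpoly \<Rightarrow> 'k mpoly" where
  "hcomp j p = (\<Sum>m\<in>Poly_Mapping.keys p. if mon_deg m = j then Poly_Mapping.single m (Poly_Mapping.lookup p m) else 0)"

definition scal :: "'k::comm_semiring_1 \<Rightarrow> 'k mpoly \<Rightarrow> 'k mpoly" where
  "scal c p = Poly_Mapping.map ((*) c) p"

definition pderiv_var :: "nat \<Rightarrow> 'k::comm_semiring_1 mpoly \<Rightarrow> 'k mpoly" where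
  "pderiv_var i p = (\<Sum>m\<in>Poly_Mapping.keys p. if Poly_Mapping.lookup m i > 0
      then Poly_Mapping.single (m - Poly_Mapping.single i 1) (of_nat (Poly_Mapping.lookup m i) * Poly_Mapping.lookup p m) else 0)"

definition diff_mon :: "(nat \<Rightarrow>\<^sub>0 nat) \<Rightarrow> 'k::comm_semiring_1 mpoly \<Rightarrow> 'k mpoly" where
  "diff_mon \<alpha> F = fold (\<lambda>i. pderiv_var i ^^ Poly_Mapping.lookup \<alpha> i) (sorted_list_of_set (Poly_Mapping.keys \<alpha>)) F"

definition contract :: "'k::comm_semiring_1 mpoly \<Rightarrow> 'k mpoly \<Rightarrow> 'k mpoly" where
  "contract g F = (\<Sum>\<alpha>\<in>Poly_Mapping.keys g. scal (Poly_Mapping.lookup g \<alpha>) (diff_mon \<alpha> F))"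

definition perp :: "nat \<Rightarrow> 'k::comm_semiring_1 mpoly \<Rightarrow> 'k mpoly set" where
  "perp n F = {g \<in> polyring n. contract g F = 0}"

definition eval_mpoly :: "'k::comm_semiring_1 mpoly \<Rightarrow> (nat \<Rightarrow> 'k) \<Rightarrow> 'k" where
  "eval_mpoly p v = (\<Sum>m\<in>Poly_Mapping.keys p. Poly_Mapping.lookup p m * (\<Prod>i\<in>Poly_Mapping.keys m. v i ^ Poly_Mapping.lookup m i))"

text \<open>A finite set of distinct points of P^n, given by representative vectors.\<close>
definition proj_point_set :: "nat \<Rightarrow> (nat \<Rightarrow> 'k::field) set \<Rightarrow> bool" where
  "proj_point_set n P \<longleftrightarrow> finite P \<and> (\<forall>v\<in>P. \<exists>i\<le>n. v i \<noteq> 0) \<and>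
     (\<forall>v\<in>P. \<forall>w\<in>P. v \<noteq> w \<longrightarrow> \<not> (\<exists>c. \<forall>i\<le>n. w i = c * v i))"

definition ideal_pts :: "nat \<Rightarrow> (nat \<Rightarrow> 'k::field) set \<Rightarrow> 'k mpoly set" where
  "ideal_pts n P = {g \<in> polyring n. \<forall>j. \<forall>v\<in>P. eval_mpoly (hcomp j g) v = 0}"

definition is_ideal :: "nat \<Rightarrow> 'k::comm_ring_1 mpoly set \<Rightarrow> bool" where
  "is_ideal n J \<longleftrightarrow> J \<subseteq> polyring n \<and> 0 \<in> J \<and> (\<forall>a\<in>J. \<forall>b\<in>J. a + b \<in> J) \<and>
     (\<forall>a\<in>J. \<forall>h\<in>polyring n. h * a \<in> J)"

definition ideal_gen :: "nat \<Rightarrow> 'k::comm_ring_1 mpoly set \<Rightarrow> 'k mpoly set" where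
  "ideal_gen n G = {(\<Sum>g\<in>A. h g * g) | A h. finite A \<and> A \<subseteq> G \<and> (\<forall>g\<in>A. h g \<in> polyring n)}"

definition colon :: "nat \<Rightarrow> 'k::comm_ring_1 mpoly set \<Rightarrow> 'k mpoly set \<Rightarrow> 'k mpoly set" where
  "colon n J I = {g \<in> polyring n. \<forall>h\<in>I. g * h \<in> J}"

definition add_principal :: "nat \<Rightarrow> 'k::comm_ring_1 mpoly set \<Rightarrow> 'k mpoly \<Rightarrow> 'k mpoly set" where
  "add_principal n J t = {a + h * t | a h. a \<in> J \<and> h \<in> polyring n}"

definition nonzerodiv_mod :: "nat \<Rightarrow> 'k::comm_ring_1 mpoly \<Rightarrow> 'k mpoly set \<Rightarrow> bool" where
  "nonzerodiv_mod n t J \<longleftrightarrow> (\<forall>g\<in>polyring n. g * t \<in> J \<longrightarrow> g \<in> J)"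

definition kdim :: "'k::field mpoly set \<Rightarrow> nat" where
  "kdim V = vector_space.dim scal V"

definition HF :: "nat \<Rightarrow> 'k::field mpoly set \<Rightarrow> nat \<Rightarrow> int" where
  "HF n J i = int (kdim (forms n i :: 'k mpoly set)) - int (kdim (J \<inter> forms n i))"

end

theory Submission
  imports Defs "HOL-Library.FuncSet" "HOL-Library.Function_Algebras"
begin

text \<open>Let \<open>J = I_X : I\<close>. As \<open>I_X \<subseteq> J\<close>, evaluation at the points embeds \<open>T_i / J_i\<close> into
  \<open>k^X\<close>, so \<open>HF(T/J, i) \<le> |X|\<close>. As \<open>t\<close> is a nonzerodivisor of degree \<open>e\<close> modulo \<open>J\<close>,
  multiplication by \<open>t\<close> embeds \<open>T_(i-e) / J_(i-e)\<close> into \<open>(J + (t))_i / J_i\<close>, so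
  \<open>HF(T/(J+(t)), i) \<le> HF(T/J, i) - HF(T/J, i - e)\<close>. Summed over \<open>i \<le> s\<close> this telescopes to
  the last \<open>e\<close> values of \<open>HF(T/J, -)\<close>, each at most \<open>|X|\<close>. Finally \<open>I_X \<subseteq> F^\<perp>\<close> gives
  \<open>J \<subseteq> F^\<perp> : I\<close>, and Hilbert functions decrease as the ideal grows. The bound holds for
  every \<open>s\<close>, not only for large ones.\<close>

section \<open>Finitely spanned subsets of a vector space\<close>

context vector_space begin

lemma independent_image_if_scalars_zero:
  assumes fin: "finite A"
    and zero: "\<And>u. (\<Sum>a\<in>A. scale (u a) (f a)) = 0 \<Longrightarrow> \<forall>a\<in>A. u a = 0"
  shows "inj_on f A \<and> independent (f ` A)"
proof -
  have inj: "inj_on f A"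
  proof (rule inj_onI, rule ccontr)
    fix a b assume ab: "a \<in> A" "b \<in> A" "f a = f b" "a \<noteq> b"
    define u where "u x = (if x = a then 1 else if x = b then -1 else 0 :: 'a)" for x
    have "(\<Sum>x\<in>A. scale (u x) (f x)) = (\<Sum>x\<in>{a,b}. scale (u x) (f x))"
      using ab fin by (intro sum.mono_neutral_right) (auto simp: u_def)
    also have "\<dots> = 0" using ab by (simp add: u_def)
    finally have "u a = 0" using zero ab(1) by blast
    then show False by (simp add: u_def)
  qed
  have "independent (f ` A)"
  proof (rule independent_if_scalars_zero)
    fix w y assume s: "(\<Sum>y\<in>f ` A. scale (w y) y) = 0" and y: "y \<in> f ` A"
    have "(\<Sum>x\<in>A. scale (w (f x)) (f x)) = 0" using s by (simp add: sum.reindex[OF inj])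
    then have "\<forall>x\<in>A. w (f x) = 0" by (rule zero)
    with y show "w y = 0" by auto
  qed (use fin in simp)
  with inj show ?thesis by simp
qed

lemma basis_extension_finitely_spanned:
  assumes "independent A" "A \<subseteq> V" "V \<subseteq> span W" "finite W"
  obtains C where "A \<subseteq> C" "C \<subseteq> V" "independent C" "V \<subseteq> span C" "finite C" "card C = dim V"
proof -
  obtain C where C: "A \<subseteq> C" "C \<subseteq> V" "independent C" "V \<subseteq> span C"
    using maximal_independent_subset_extend[OF assms(2,1)] by metis
  have "C \<subseteq> span W" using C(2) assms(3) by (rule order_trans)
  then have "finite C" using independent_span_bound[OF assms(4) C(3)] by simp
  then show ?thesis using that[OF C] basis_card_eq_dim[OF C(2,4,3)] by simp
qed

lemma basis_finitely_spanned:
  assumes "V \<subseteq> span W" "finite W"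
  obtains B where "B \<subseteq> V" "independent B" "V \<subseteq> span B" "finite B" "card B = dim V"
  by (rule basis_extension_finitely_spanned[OF independent_empty empty_subsetI assms]) (rule that)

lemma card_le_dim_finitely_spanned:
  assumes "independent A" "A \<subseteq> V" "V \<subseteq> span W" "finite W"
  shows "card A \<le> dim V"
proof -
  obtain C where "A \<subseteq> C" "finite C" "card C = dim V"
    using basis_extension_finitely_spanned[OF assms] by metis
  then show ?thesis using card_mono[of C A] by simp
qed

lemma dim_mono_finitely_spanned:
  assumes "S \<subseteq> V" "V \<subseteq> span W" "finite W"
  shows "dim S \<le> dim V"
proof -
  have "S \<subseteq> span W" using assms(1,2) by (rule order_trans)
  then obtain B where B: "B \<subseteq> S" "independent B" "card B = dim S"
    using basis_finitely_spanned assms(3) by metis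
  have "B \<subseteq> V" using B(1) assms(1) by (rule order_trans)
  then show ?thesis using card_le_dim_finitely_spanned[OF B(2) _ assms(2,3)] B(3) by simp
qed

text \<open>\<open>D\<close> is a basis of \<open>V\<close> modulo \<open>U\<close>: extend a basis of \<open>U\<close> to one of \<open>V\<close> and keep the
  new vectors.\<close>

lemma complement_basis_exists:
  assumes U: "U \<subseteq> V" and V: "V \<subseteq> span W" "finite W"
  obtains D where "finite D" "D \<subseteq> V" "dim U + card D = dim V"
    "\<And>u. (\<Sum>d\<in>D. scale (u d) d) \<in> U \<Longrightarrow> \<forall>d\<in>D. u d = 0"
proof -
  have "U \<subseteq> span W" using U V(1) by (rule order_trans)
  then obtain E where E: "E \<subseteq> U" "independent E" "U \<subseteq> span E" "finite E" "card E = dim U"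
    using basis_finitely_spanned V(2) by metis
  have "E \<subseteq> V" using E(1) U by (rule order_trans)
  then obtain C where C: "E \<subseteq> C" "C \<subseteq> V" "independent C" "finite C" "card C = dim V"
    using basis_extension_finitely_spanned[OF E(2) _ V] by metis
  define D where "D = C - E"
  have CDE: "C = D \<union> E" "D \<inter> E = {}" using C(1) by (auto simp: D_def)
  have "\<forall>d\<in>D. u d = 0" if u: "(\<Sum>d\<in>D. scale (u d) d) \<in> U" for u
  proof -
    obtain w where w: "(\<Sum>d\<in>D. scale (u d) d) = (\<Sum>x\<in>E. scale (w x) x)"
      using u E(3) span_finite[OF E(4)] by blast
    define c where "c x = (if x \<in> D then u x else - w x)" for x
    have "(\<Sum>x\<in>C. scale (c x) x) = (\<Sum>x\<in>D. scale (c x) x) + (\<Sum>x\<in>E. scale (c x) x)"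
      unfolding CDE(1) by (rule sum.union_disjoint) (use C(4) CDE in auto)
    also have "\<dots> = (\<Sum>d\<in>D. scale (u d) d) - (\<Sum>x\<in>E. scale (w x) x)"
      using CDE(2) by (auto simp: c_def sum_negf[symmetric] scale_minus_left intro!: sum.cong)
    finally have "(\<Sum>x\<in>C. scale (c x) x) = 0" using w by simp
    then have "\<forall>x\<in>C. c x = 0" using independentD[OF C(3) C(4) order_refl] by blast
    then show ?thesis by (auto simp: c_def D_def)
  qed
  moreover have "dim U + card D = dim V"
    using C E card_mono[OF C(4,1)] by (simp add: D_def card_Diff_subset)
  moreover have "finite D" "D \<subseteq> V" using C(2,4) by (auto simp: D_def)
  ultimately show thesis using that by blast
qed

end

interpretation fun_space: vector_space "(\<lambda>c f x. c * f x) :: 'k::field \<Rightarrow> ('a \<Rightarrow> 'k) \<Rightarrow> ('a \<Rightarrow> 'k)"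
  by unfold_locales (simp_all add: fun_eq_iff algebra_simps)

lemma sum_fun_apply: "(sum f A) x = (\<Sum>a\<in>A. f a x)"
  by (induct A rule: infinite_finite_induct) auto

lemma fun_space_independent_card_le:
  fixes A :: "('a \<Rightarrow> 'k::field) set"
  assumes "fun_space.independent A" "finite P" "\<And>f x. f \<in> A \<Longrightarrow> x \<notin> P \<Longrightarrow> f x = 0"
  shows "card A \<le> card P"
proof -
  define \<delta> where "\<delta> y = (\<lambda>x. if x = y then 1 else 0 :: 'k)" for y :: 'a
  have "f \<in> fun_space.span (\<delta> ` P)" if f: "f \<in> A" for f
  proof -
    have "(\<Sum>y\<in>P. (\<lambda>x. f y * \<delta> y x)) x = f x" for x
    proof -
      have "(\<Sum>y\<in>P. (\<lambda>x. f y * \<delta> y x)) x = (\<Sum>y\<in>P. if y = x then f x else 0)"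
        unfolding sum_fun_apply \<delta>_def by (intro sum.cong) auto
      also have "\<dots> = f x" using assms(3) f by (simp add: sum.delta[OF assms(2)])
      finally show ?thesis .
    qed
    then have "f = (\<Sum>y\<in>P. (\<lambda>x. f y * \<delta> y x))" by auto
    also have "\<dots> \<in> fun_space.span (\<delta> ` P)"
      by (intro fun_space.span_sum fun_space.span_scale fun_space.span_base) simp
    finally show ?thesis .
  qed
  then have "card A \<le> card (\<delta> ` P)"
    using fun_space.independent_span_bound[of "\<delta> ` P" A] assms(1,2) by auto
  also have "\<dots> \<le> card P" using assms(2) by (rule card_image_le)
  finally show ?thesis .
qed

section \<open>Polynomial arithmetic\<close>

lemma scal_conv_mult: "scal c p = Poly_Mapping.single 0 c * p"
  by (simp add: scal_def mult_map_scale_conv_mult)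

interpretation mp: vector_space "scal :: 'k::field \<Rightarrow> 'k mpoly \<Rightarrow> 'k mpoly"
  by unfold_locales
    (simp_all add: scal_conv_mult distrib_left distrib_right single_add mult_single flip: mult.assoc)

lemma kdim_eq_dim: "kdim V = mp.dim V"
  by (simp add: kdim_def)

lemma lookup_scal: "Poly_Mapping.lookup (scal c p) m = c * Poly_Mapping.lookup p m"
  by (simp add: scal_def map.rep_eq when_def)

lemma single_eq_scal: "Poly_Mapping.single m c = scal c (Poly_Mapping.single m (1::'k::field))"
  by (rule poly_mapping_eqI) (simp add: lookup_scal lookup_single when_def)

lemma poly_mapping_sum_singles:
  "p = (\<Sum>m\<in>Poly_Mapping.keys p. Poly_Mapping.single m (Poly_Mapping.lookup p m))"
  by (rule poly_mapping_eqI) (simp add: lookup_sum lookup_single when_def in_keys_iff)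

lemma additive_poly_mapping_eqI:
  fixes F G :: "('m \<Rightarrow>\<^sub>0 'a::comm_monoid_add) \<Rightarrow> 'b::comm_monoid_add"
  assumes "F 0 = 0" "\<And>x y. F (x + y) = F x + F y"
    and "G 0 = 0" "\<And>x y. G (x + y) = G x + G y"
    and "\<And>m c. F (Poly_Mapping.single m c) = G (Poly_Mapping.single m c)"
  shows "F p = G p"
proof -
  let ?s = "\<lambda>m. Poly_Mapping.single m (Poly_Mapping.lookup p m)"
  have "F p = (\<Sum>m\<in>Poly_Mapping.keys p. F (?s m))"
    by (subst poly_mapping_sum_singles, rule sum_comp_morphism[symmetric, unfolded o_def]) (use assms in auto)
  also have "\<dots> = (\<Sum>m\<in>Poly_Mapping.keys p. G (?s m))" using assms(5) by simp
  also have "\<dots> = G p"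
    by (subst (2) poly_mapping_sum_singles, rule sum_comp_morphism[unfolded o_def]) (use assms in auto)
  finally show ?thesis .
qed

lemma mon_deg_add: "mon_deg (a + b) = mon_deg a + mon_deg b"
  unfolding mon_deg_def using setsum_keys_plus_distrib[of "\<lambda>k x. x" a b] by simp

lemma lookup_hcomp:
  "Poly_Mapping.lookup (hcomp j p) m = (if mon_deg m = j then Poly_Mapping.lookup p m else 0)"
proof -
  have "Poly_Mapping.lookup (hcomp j p) m =
      (\<Sum>m'\<in>Poly_Mapping.keys p. if m' = m then (if mon_deg m = j then Poly_Mapping.lookup p m else 0) else 0)"
    unfolding hcomp_def lookup_sum by (rule sum.cong) (auto simp: lookup_single when_def)
  then show ?thesis by (simp add: in_keys_iff)
qed

lemma hcomp_add: "hcomp j (p + q) = hcomp j p + hcomp j q"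
  by (rule poly_mapping_eqI) (simp add: lookup_hcomp lookup_add)

lemma hcomp_0 [simp]: "hcomp j 0 = 0"
  by (rule poly_mapping_eqI) (simp add: lookup_hcomp)

lemma hcomp_single:
  "hcomp j (Poly_Mapping.single a c) = (if mon_deg a = j then Poly_Mapping.single a c else 0)"
  by (rule poly_mapping_eqI) (simp add: lookup_hcomp lookup_single when_def)

lemma hcomp_mult:
  fixes p q :: "'k::comm_ring_1 mpoly"
  shows "hcomp j (p * q) = (\<Sum>k\<le>j. hcomp k p * hcomp (j - k) q)"
proof -
  have single: "hcomp j (Poly_Mapping.single a c * q) =
      (\<Sum>k\<le>j. hcomp k (Poly_Mapping.single a c) * hcomp (j - k) q)" for a c
  proof (rule additive_poly_mapping_eqI[where F = "\<lambda>q. hcomp j (Poly_Mapping.single a c * q)"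
        and G = "\<lambda>q. \<Sum>k\<le>j. hcomp k (Poly_Mapping.single a c) * hcomp (j - k) q"])
    fix b d
    have "(\<Sum>k\<le>j. hcomp k (Poly_Mapping.single a c) * hcomp (j - k) (Poly_Mapping.single b d))
       = (\<Sum>k\<le>j. if k = mon_deg a then
            (if mon_deg b = j - mon_deg a then Poly_Mapping.single (a + b) (c * d) else 0) else 0)"
      by (rule sum.cong) (simp_all add: hcomp_single mult_single)
    also have "\<dots> = hcomp j (Poly_Mapping.single a c * Poly_Mapping.single b d)"
      by (simp add: hcomp_single mult_single mon_deg_add) arith
    finally show "hcomp j (Poly_Mapping.single a c * Poly_Mapping.single b d) =
       (\<Sum>k\<le>j. hcomp k (Poly_Mapping.single a c) * hcomp (j - k) (Poly_Mapping.single b d))"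
      by simp
  qed (simp_all add: hcomp_add distrib_left sum.distrib)
  show ?thesis
    by (rule additive_poly_mapping_eqI[where F = "\<lambda>p. hcomp j (p * q)"
          and G = "\<lambda>p. \<Sum>k\<le>j. hcomp k p * hcomp (j - k) q"])
      (simp_all add: hcomp_add distrib_right sum.distrib single)
qed

definition eval_monomial :: "(nat \<Rightarrow>\<^sub>0 nat) \<Rightarrow> (nat \<Rightarrow> 'k::comm_semiring_1) \<Rightarrow> 'k" where
  "eval_monomial m v = (\<Prod>i\<in>Poly_Mapping.keys m. v i ^ Poly_Mapping.lookup m i)"

lemma eval_monomial_add: "eval_monomial (a + b) v = eval_monomial a v * eval_monomial b v"
proof -
  let ?U = "Poly_Mapping.keys a \<union> Poly_Mapping.keys b"
  have keys: "Poly_Mapping.keys (a + b) = ?U"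
    by (auto simp: in_keys_iff lookup_add)
  have restrict: "eval_monomial x v = (\<Prod>i\<in>?U. v i ^ Poly_Mapping.lookup x i)" if "x \<in> {a, b}" for x
    unfolding eval_monomial_def using that by (intro prod.mono_neutral_left) (auto simp: in_keys_iff)
  have "eval_monomial (a + b) v =
      (\<Prod>i\<in>?U. v i ^ Poly_Mapping.lookup a i) * (\<Prod>i\<in>?U. v i ^ Poly_Mapping.lookup b i)"
    unfolding eval_monomial_def keys by (simp add: lookup_add power_add prod.distrib)
  then show ?thesis using restrict by simp
qed

lemma eval_mpoly_0 [simp]: "eval_mpoly 0 v = 0"
  by (simp add: eval_mpoly_def)

lemma eval_mpoly_add: "eval_mpoly (p + q) v = eval_mpoly p v + eval_mpoly q v"
  unfolding eval_mpoly_def eval_monomial_def[symmetric]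
  by (rule setsum_keys_plus_distrib) (simp_all add: distrib_right)

lemma eval_mpoly_single: "eval_mpoly (Poly_Mapping.single m c) v = c * eval_monomial m v"
  by (simp add: eval_mpoly_def eval_monomial_def)

lemma eval_mpoly_mult:
  fixes p q :: "'k::comm_ring_1 mpoly"
  shows "eval_mpoly (p * q) v = eval_mpoly p v * eval_mpoly q v"
proof -
  have single: "eval_mpoly (Poly_Mapping.single a c * q) v =
      eval_mpoly (Poly_Mapping.single a c) v * eval_mpoly q v" for a c
    by (rule additive_poly_mapping_eqI[where F = "\<lambda>q. eval_mpoly (Poly_Mapping.single a c * q) v"
          and G = "\<lambda>q. eval_mpoly (Poly_Mapping.single a c) v * eval_mpoly q v"])
      (simp_all add: eval_mpoly_add distrib_left mult_single eval_mpoly_single eval_monomial_add)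
  show ?thesis
    by (rule additive_poly_mapping_eqI[where F = "\<lambda>p. eval_mpoly (p * q) v"
          and G = "\<lambda>p. eval_mpoly p v * eval_mpoly q v"])
      (simp_all add: eval_mpoly_add distrib_right single)
qed

lemma eval_mpoly_sum: "eval_mpoly (sum f A) v = (\<Sum>a\<in>A. eval_mpoly (f a) v)"
  using sum_comp_morphism[of "\<lambda>p. eval_mpoly p v" f A]
  by (simp add: eval_mpoly_add o_def)

lemma eval_mpoly_scal: "eval_mpoly (scal c (p :: 'k::comm_ring_1 mpoly)) v = c * eval_mpoly p v"
  by (simp add: scal_conv_mult eval_mpoly_mult eval_mpoly_single eval_monomial_def)

section \<open>Polynomial rings and forms\<close>

lemma polyring_0 [simp]: "0 \<in> polyring n"
  by (simp add: polyring_def)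

lemma polyring_single_0 [simp]: "Poly_Mapping.single 0 c \<in> polyring n"
  by (simp add: polyring_def)

lemma polyring_add: "p \<in> polyring n \<Longrightarrow> q \<in> polyring n \<Longrightarrow> p + q \<in> polyring n"
  unfolding polyring_def using keys_add[of p q] by blast

lemma keys_mult_mpolyE:
  assumes "m \<in> Poly_Mapping.keys (p * q)"
  obtains a b where "m = a + b" "a \<in> Poly_Mapping.keys p" "b \<in> Poly_Mapping.keys q"
  using subsetD[OF keys_mult assms] by blast

lemma polyring_mult:
  assumes "p \<in> polyring n" "q \<in> polyring n"
  shows "p * q \<in> polyring n"
proof -
  have "Poly_Mapping.keys m \<subseteq> {..n}" if m: "m \<in> Poly_Mapping.keys (p * q)" for m
  proof -
    obtain a b where "m = a + b" "a \<in> Poly_Mapping.keys p" "b \<in> Poly_Mapping.keys q"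
      using m by (rule keys_mult_mpolyE)
    with assms show ?thesis using keys_add[of a b] unfolding polyring_def by blast
  qed
  then show ?thesis by (simp add: polyring_def)
qed

lemma polyring_scal: "p \<in> polyring n \<Longrightarrow> scal c (p :: 'k::field mpoly) \<in> polyring n"
  by (simp add: scal_conv_mult polyring_mult)

lemma subspace_polyring: "mp.subspace (polyring n :: 'k::field mpoly set)"
  by (rule mp.subspaceI) (simp_all add: polyring_add polyring_scal)

lemma forms_subset_polyring: "forms n i \<subseteq> polyring n"
  by (auto simp: forms_def)

lemma subspace_forms: "mp.subspace (forms n i :: 'k::field mpoly set)"
proof (rule mp.subspaceI)
  fix p q :: "'k mpoly" and c assume "p \<in> forms n i" "q \<in> forms n i"
  then show "p + q \<in> forms n i" "scal c p \<in> forms n i"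
    unfolding forms_def using keys_add[of p q] polyring_add polyring_scal
    by (auto simp: in_keys_iff lookup_scal)
qed (simp add: forms_def)

lemma forms_mult:
  assumes "p \<in> forms n a" "q \<in> forms n b"
  shows "p * q \<in> forms n (a + b)"
proof -
  have "mon_deg m = a + b" if "m \<in> Poly_Mapping.keys (p * q)" for m
    using that by (rule keys_mult_mpolyE) (use assms in \<open>auto simp: forms_def mon_deg_add\<close>)
  moreover have "p * q \<in> polyring n" using assms forms_subset_polyring polyring_mult by blast
  ultimately show ?thesis unfolding forms_def by blast
qed

definition exponents :: "nat \<Rightarrow> nat \<Rightarrow> (nat \<Rightarrow>\<^sub>0 nat) set" where
  "exponents n i = {m. Poly_Mapping.keys m \<subseteq> {..n} \<and> mon_deg m = i}"

lemma lookup_le_mon_deg: "Poly_Mapping.lookup m j \<le> mon_deg m"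
  by (cases "j \<in> Poly_Mapping.keys m") (auto simp: mon_deg_def in_keys_iff intro: member_le_sum)

text \<open>An exponent vector of degree \<open>i\<close> in the variables \<open>0..n\<close> is determined by its restriction
  to \<open>{..n}\<close>, a function into \<open>{..i}\<close>.\<close>

lemma finite_exponents: "finite (exponents n i)"
proof -
  let ?F = "\<lambda>f. Abs_poly_mapping (\<lambda>j. if j \<le> n then f j else (0::nat))"
  have "exponents n i \<subseteq> ?F ` PiE {..n} (\<lambda>_. {..i})"
  proof
    fix m assume m: "m \<in> exponents n i"
    have "(\<lambda>j. if j \<le> n then restrict (Poly_Mapping.lookup m) {..n} j else 0) = Poly_Mapping.lookup m"
      using m by (auto simp: exponents_def in_keys_iff fun_eq_iff)
    then have "m = ?F (restrict (Poly_Mapping.lookup m) {..n})"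
      by (simp only: lookup_inverse)
    moreover have "restrict (Poly_Mapping.lookup m) {..n} \<in> PiE {..n} (\<lambda>_. {..i})"
      using m lookup_le_mon_deg[of m] by (auto simp: exponents_def)
    ultimately show "m \<in> ?F ` PiE {..n} (\<lambda>_. {..i})" by blast
  qed
  then show ?thesis by (rule finite_subset) (simp add: finite_PiE)
qed

lemma forms_subset_span_monomials:
  "forms n i \<subseteq> mp.span ((\<lambda>m. Poly_Mapping.single m (1::'k::field)) ` exponents n i)"
proof
  fix p :: "'k mpoly" assume p: "p \<in> forms n i"
  have "Poly_Mapping.single m (Poly_Mapping.lookup p m) \<in>
      mp.span ((\<lambda>m. Poly_Mapping.single m 1) ` exponents n i)" if "m \<in> Poly_Mapping.keys p" for m
  proof -
    have "m \<in> exponents n i" using p that by (auto simp: forms_def polyring_def exponents_def)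
    then show ?thesis by (subst single_eq_scal) (intro mp.span_scale mp.span_base imageI)
  qed
  then show "p \<in> mp.span ((\<lambda>m. Poly_Mapping.single m 1) ` exponents n i)"
    by (subst poly_mapping_sum_singles) (rule mp.span_sum)
qed

lemma dim_forms_mono:
  fixes V W :: "'k::field mpoly set"
  assumes "V \<subseteq> W"
  shows "mp.dim (V \<inter> forms n i) \<le> mp.dim (W \<inter> forms n i)"
proof (rule mp.dim_mono_finitely_spanned)
  show "W \<inter> forms n i \<subseteq> mp.span ((\<lambda>m. Poly_Mapping.single m 1) ` exponents n i)"
    using forms_subset_span_monomials by blast
qed (use assms finite_exponents in auto)

section \<open>Ideals\<close>

lemma is_ideal_imp_subspace:
  assumes "is_ideal n (J :: 'k::field mpoly set)"
  shows "mp.subspace J"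
  using assms by (intro mp.subspaceI) (auto simp: is_ideal_def scal_conv_mult)

lemma ideal_gen_subset_polyring:
  assumes "G \<subseteq> polyring n"
  shows "ideal_gen n G \<subseteq> (polyring n :: 'k::field mpoly set)"
proof
  fix x assume "x \<in> ideal_gen n G"
  then obtain A h where x: "x = (\<Sum>g\<in>A. h g * g)" "A \<subseteq> G" "\<forall>g\<in>A. h g \<in> polyring n"
    by (auto simp: ideal_gen_def)
  show "x \<in> polyring n" unfolding x(1)
    by (rule mp.subspace_sum[OF subspace_polyring]) (use x assms in \<open>auto intro: polyring_mult\<close>)
qed

lemma is_ideal_colon:
  assumes "is_ideal n J"
  shows "is_ideal n (colon n J I)"
  using assms polyring_add polyring_mult
  by (auto simp: is_ideal_def colon_def distrib_right mult.assoc)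

lemma ideal_subset_colon:
  assumes "is_ideal n J" "I \<subseteq> polyring n"
  shows "J \<subseteq> colon n J I"
  using assms by (auto simp: is_ideal_def colon_def mult.commute subset_iff)

lemma colon_mono: "J \<subseteq> J' \<Longrightarrow> colon n J I \<subseteq> colon n J' I"
  by (auto simp: colon_def)

lemma is_ideal_ideal_pts: "is_ideal n (ideal_pts n (P :: (nat \<Rightarrow> 'k::field) set))"
  unfolding is_ideal_def
proof (intro conjI ballI)
  fix g h :: "'k mpoly" assume g: "g \<in> ideal_pts n P" and h: "h \<in> polyring n"
  have "eval_mpoly (hcomp j (h * g)) v = 0" if "v \<in> P" for j v
    using g that by (simp add: hcomp_mult eval_mpoly_sum eval_mpoly_mult ideal_pts_def)
  moreover have "h * g \<in> polyring n" using g h by (simp add: ideal_pts_def polyring_mult)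
  ultimately show "h * g \<in> ideal_pts n P" by (simp add: ideal_pts_def)
qed (auto simp: ideal_pts_def polyring_add hcomp_add eval_mpoly_add)

lemma form_in_ideal_pts:
  assumes p: "p \<in> forms n i" and vanish: "\<And>v. v \<in> P \<Longrightarrow> eval_mpoly p v = 0"
  shows "p \<in> ideal_pts n P"
proof -
  have "hcomp j p = (if j = i then p else 0)" for j
    using p by (intro poly_mapping_eqI) (auto simp: lookup_hcomp forms_def in_keys_iff)
  then show ?thesis using p vanish subsetD[OF forms_subset_polyring p] by (auto simp: ideal_pts_def)
qed

lemma subset_add_principal: "J \<subseteq> add_principal n J t"
proof
  fix x assume "x \<in> J"
  then show "x \<in> add_principal n J t"
    unfolding add_principal_def by (intro CollectI exI[of _ x] exI[of _ 0]) simp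
qed

lemma add_principal_mono: "J \<subseteq> J' \<Longrightarrow> add_principal n J t \<subseteq> add_principal n J' t"
  by (auto simp: add_principal_def)

section \<open>Hilbert functions\<close>

lemma HF_antimono:
  fixes J J' :: "'k::field mpoly set"
  assumes "J \<subseteq> J'"
  shows "HF n J' i \<le> HF n J i"
  using dim_forms_mono[OF assms, of n i] by (simp add: HF_def kdim_eq_dim)

lemma HF_le_card_if_ideal_pts_subset:
  fixes P :: "(nat \<Rightarrow> 'k::field) set"
  assumes "finite P" "ideal_pts n P \<subseteq> J"
  shows "HF n J i \<le> int (card P)"
proof -
  obtain D where D: "finite D" "D \<subseteq> forms n i"
      "mp.dim (J \<inter> forms n i) + card D = mp.dim (forms n i :: 'k mpoly set)"
      "\<And>u. (\<Sum>d\<in>D. scal (u d) d) \<in> J \<inter> forms n i \<Longrightarrow> \<forall>d\<in>D. u d = 0"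
    by (rule mp.complement_basis_exists[of "J \<inter> forms n i", OF Int_lower2 forms_subset_span_monomials
          finite_imageI[OF finite_exponents]]) blast
  define ev where "ev p = (\<lambda>v. if v \<in> P then eval_mpoly p v else 0)" for p :: "'k mpoly"
  have "inj_on ev D \<and> fun_space.independent (ev ` D)"
  proof (rule fun_space.independent_image_if_scalars_zero[OF D(1)])
    fix u assume u: "(\<Sum>d\<in>D. (\<lambda>v. u d * ev d v)) = 0"
    define p where "p = (\<Sum>d\<in>D. scal (u d) d)"
    have "p \<in> forms n i"
      unfolding p_def using D(2)
      by (intro mp.subspace_sum[OF subspace_forms] mp.subspace_scale[OF subspace_forms]) auto
    moreover have "eval_mpoly p v = 0" if "v \<in> P" for v
    proof -
      have "eval_mpoly p v = (\<Sum>d\<in>D. (\<lambda>v. u d * ev d v)) v"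
        using that by (simp add: p_def eval_mpoly_sum eval_mpoly_scal sum_fun_apply ev_def)
      then show ?thesis using u by simp
    qed
    ultimately have "p \<in> J \<inter> forms n i" using assms(2) form_in_ideal_pts by blast
    then show "\<forall>d\<in>D. u d = 0" unfolding p_def by (rule D(4))
  qed
  moreover have "card (ev ` D) \<le> card P"
    using calculation assms(1) by (intro fun_space_independent_card_le) (auto simp: ev_def)
  ultimately have "card D \<le> card P" by (simp add: card_image)
  then show ?thesis using D(3) by (simp add: HF_def kdim_eq_dim)
qed

text \<open>A relation \<open>r + t q = 0\<close> with \<open>r \<in> J\<close> puts \<open>q t\<close>, hence \<open>q\<close>, into \<open>J\<close>.\<close>

lemma independent_Plus_times_complement:
  fixes J :: "'k::field mpoly set"
  assumes J: "mp.subspace J" and nzd: "nonzerodiv_mod n t J"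
    and E: "E \<subseteq> J" "mp.independent E" "finite E"
    and D: "finite D" "D \<subseteq> forms n k" "\<And>u. (\<Sum>d\<in>D. scal (u d) d) \<in> J \<inter> forms n k \<Longrightarrow> \<forall>d\<in>D. u d = 0"
  shows "inj_on (case_sum id ((*) t)) (E <+> D) \<and> mp.independent (case_sum id ((*) t) ` (E <+> D))"
proof (rule mp.independent_image_if_scalars_zero)
  fix u assume u: "(\<Sum>a\<in>E <+> D. scal (u a) (case_sum id ((*) t) a)) = 0"
  define r where "r = (\<Sum>x\<in>E. scal (u (Inl x)) x)"
  define q where "q = (\<Sum>d\<in>D. scal (u (Inr d)) d)"
  have "(\<Sum>a\<in>E <+> D. scal (u a) (case_sum id ((*) t) a)) = r + t * q"
    using E(3) D(1)
    by (simp add: sum.Plus r_def q_def sum_distrib_left scal_conv_mult mult.left_commute)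
  then have rq: "r + t * q = 0" using u by simp
  have "r \<in> J"
    unfolding r_def using E(1) by (intro mp.subspace_sum[OF J] mp.subspace_scale[OF J]) auto
  moreover have "q * t = - r" using rq by (simp add: mult.commute add_eq_0_iff2)
  ultimately have "q * t \<in> J" using mp.subspace_neg[OF J] by simp
  moreover have q: "q \<in> forms n k"
    unfolding q_def using D(2)
    by (intro mp.subspace_sum[OF subspace_forms] mp.subspace_scale[OF subspace_forms]) auto
  ultimately have "q \<in> J" using nzd forms_subset_polyring by (auto simp: nonzerodiv_mod_def)
  then have uD: "\<forall>d\<in>D. u (Inr d) = 0" using q D(3)[of "\<lambda>d. u (Inr d)"] unfolding q_def by blast
  then have "r = 0" using rq by (simp add: q_def)
  then have uE: "\<forall>x\<in>E. u (Inl x) = 0"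
    unfolding r_def using mp.independentD[OF E(2) E(3) order_refl, of "\<lambda>x. u (Inl x)"] by blast
  show "\<forall>a\<in>E <+> D. u a = 0" using uD uE by auto
qed (use E(3) D(1) in simp)

lemma HF_add_principal_le:
  fixes J :: "'k::field mpoly set"
  assumes J: "mp.subspace J" and nzd: "nonzerodiv_mod n t J" and t: "t \<in> forms n e" and "e \<le> i"
  shows "HF n (add_principal n J t) i \<le> HF n J i - HF n J (i - e)"
proof -
  let ?M = "\<lambda>i. (\<lambda>m. Poly_Mapping.single m (1::'k)) ` exponents n i"
  have span: "V \<inter> forms n i \<subseteq> mp.span (?M i)" for V i
    using forms_subset_span_monomials by blast
  obtain E where E: "E \<subseteq> J \<inter> forms n i" "mp.independent E" "finite E"
      "card E = mp.dim (J \<inter> forms n i)"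
    using mp.basis_finitely_spanned[OF span finite_imageI[OF finite_exponents]] by metis
  obtain D where D: "finite D" "D \<subseteq> forms n (i - e)"
      "mp.dim (J \<inter> forms n (i - e)) + card D = mp.dim (forms n (i - e) :: 'k mpoly set)"
      "\<And>u. (\<Sum>d\<in>D. scal (u d) d) \<in> J \<inter> forms n (i - e) \<Longrightarrow> \<forall>d\<in>D. u d = 0"
    by (rule mp.complement_basis_exists[of "J \<inter> forms n (i - e)", OF Int_lower2
          forms_subset_span_monomials finite_imageI[OF finite_exponents]]) blast
  define g where "g = case_sum id ((*) t)"
  have indep: "inj_on g (E <+> D) \<and> mp.independent (g ` (E <+> D))"
    unfolding g_def using E D by (intro independent_Plus_times_complement[OF J nzd]) auto
  have "g (Inl x) \<in> add_principal n J t \<inter> forms n i" if "x \<in> E" for x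
    using that E(1) subset_add_principal by (fastforce simp: g_def)
  moreover have "g (Inr d) \<in> add_principal n J t \<inter> forms n i" if "d \<in> D" for d
  proof -
    have d: "d \<in> forms n (i - e)" using D(2) that by blast
    then have "t * d \<in> forms n i" using forms_mult[OF t] \<open>e \<le> i\<close> by fastforce
    moreover have "t * d \<in> add_principal n J t"
      using d forms_subset_polyring mp.subspace_0[OF J]
      unfolding add_principal_def by (intro CollectI exI[of _ 0] exI[of _ d]) (auto simp: mult.commute)
    ultimately show ?thesis by (simp add: g_def)
  qed
  ultimately have "g ` (E <+> D) \<subseteq> add_principal n J t \<inter> forms n i" by blast
  then have "card (g ` (E <+> D)) \<le> mp.dim (add_principal n J t \<inter> forms n i)"
    using mp.card_le_dim_finitely_spanned[OF conjunct2[OF indep] _ span finite_imageI[OF finite_exponents]]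
    by blast
  moreover have "card (g ` (E <+> D)) = card E + card D"
    using card_image[OF conjunct1[OF indep]] card_Plus[OF E(3) D(1)] by simp
  ultimately show ?thesis using E(4) D(3) by (simp add: HF_def kdim_eq_dim)
qed

lemma sum_atMost_diff_shift:
  fixes h :: "nat \<Rightarrow> int"
  assumes "e > 0"
  shows "(\<Sum>i\<le>s. h i - (if e \<le> i then h (i - e) else 0)) = (\<Sum>i\<le>s. if s < i + e then h i else 0)"
proof (induction s)
  case 0
  then show ?case using assms by simp
next
  case (Suc s)
  have "(\<Sum>i\<le>s. if s < i + e then h i else 0) =
      (\<Sum>i\<le>s. if Suc s < i + e then h i else 0) + (\<Sum>i\<le>s. if i = Suc s - e \<and> e \<le> Suc s then h i else 0)"
    unfolding sum.distrib[symmetric] by (rule sum.cong) auto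
  also have "(\<Sum>i\<le>s. if i = Suc s - e \<and> e \<le> Suc s then h i else 0) =
      (if e \<le> Suc s then h (Suc s - e) else 0)"
    using assms by (auto simp: sum.delta')
  finally show ?case using Suc.IH assms by simp
qed

text \<open>The differences telescope, leaving at most \<open>e\<close> values of \<open>h\<close>.\<close>

lemma sum_le_of_bounded_differences:
  fixes g h :: "nat \<Rightarrow> int"
  assumes "e > 0" "\<And>i. g i \<le> h i - (if e \<le> i then h (i - e) else 0)" "\<And>i. h i \<le> c" "0 \<le> c"
  shows "(\<Sum>i\<le>s. g i) \<le> int e * c"
proof -
  have "(\<Sum>i\<le>s. g i) \<le> (\<Sum>i\<le>s. if s < i + e then h i else 0)"
    using sum_mono[of "{..s}" g, OF assms(2)] sum_atMost_diff_shift[OF assms(1)] by simp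
  also have "\<dots> \<le> (\<Sum>i\<le>s. if s < i + e then c else 0)"
    by (rule sum_mono) (simp add: assms(3))
  also have "\<dots> = int (card {i\<in>{..s}. s < i + e}) * c"
    by (subst sum.inter_filter[symmetric]) simp_all
  also have "\<dots> \<le> int e * c"
  proof -
    have "{i\<in>{..s}. s < i + e} \<subseteq> {Suc s - e..s}" by auto
    then have "card {i\<in>{..s}. s < i + e} \<le> card {Suc s - e..s}"
      by (intro card_mono) auto
    then have "card {i\<in>{..s}. s < i + e} \<le> e" by simp
    then show ?thesis using assms(4) by (simp add: mult_right_mono)
  qed
  finally show ?thesis .
qed

theorem theorem3p3:
  fixes n d e :: nat and F t :: "'k::field_char_0 mpoly"
    and P :: "(nat \<Rightarrow> 'k) set" and I :: "'k mpoly set"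
  assumes "alg_closed_field TYPE('k)"
    and "n \<ge> 1"
    and "F \<in> forms n d"
    and "proj_point_set n P"
    and "ideal_pts n P \<subseteq> perp n F"
    and "e > 0"
    and "\<exists>G. G \<subseteq> forms n e \<and> I = ideal_gen n G"
    and "t \<in> I \<inter> forms n e"
    and "nonzerodiv_mod n t (colon n (ideal_pts n P) I)"
  shows "\<exists>s0. \<forall>s\<ge>s0.
     int e * int (card P) \<ge> (\<Sum>i\<le>s. HF n (add_principal n (colon n (ideal_pts n P) I) t) i) \<and>
     (\<Sum>i\<le>s. HF n (add_principal n (colon n (ideal_pts n P) I) t) i) \<ge>
     (\<Sum>i\<le>s. HF n (add_principal n (colon n (perp n F) I) t) i)"
proof -
  define J where "J = colon n (ideal_pts n P) I"
  have "I \<subseteq> polyring n"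
    using assms(7) forms_subset_polyring ideal_gen_subset_polyring by (metis order_trans)
  then have "ideal_pts n P \<subseteq> J"
    unfolding J_def by (rule ideal_subset_colon[OF is_ideal_ideal_pts])
  then have HF_J: "HF n J i \<le> int (card P)" for i
    using assms(4) by (intro HF_le_card_if_ideal_pts_subset) (auto simp: proj_point_set_def)
  have J: "mp.subspace J"
    unfolding J_def by (intro is_ideal_imp_subspace[of n] is_ideal_colon is_ideal_ideal_pts)
  have "HF n (add_principal n J t) i \<le> HF n J i - (if e \<le> i then HF n J (i - e) else 0)" for i
  proof (cases "e \<le> i")
    case True
    then show ?thesis using HF_add_principal_le[OF J] assms(8,9) by (simp add: J_def)
  qed (simp add: HF_antimono[OF subset_add_principal])
  then have "(\<Sum>i\<le>s. HF n (add_principal n J t) i) \<le> int e * int (card P)" for s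
    by (rule sum_le_of_bounded_differences[OF assms(6)]) (simp_all add: HF_J)
  moreover have "HF n (add_principal n (colon n (perp n F) I) t) i \<le> HF n (add_principal n J t) i" for i
    unfolding J_def using assms(5) by (intro HF_antimono add_principal_mono colon_mono)
  ultimately show ?thesis unfolding J_def by (auto intro: sum_mono)
qed

end
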